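(* For all positive integers $\alpha,\beta,p$, $$C(\alpha,\beta,p)\ge\max\left\{\frac{C(\alpha,1,p)}{\beta},\frac{C(1,\beta,p)}{\alpha}\right\}.$$
   Context: Memory cells are binary; cell-state vectors of $n$ cells lie in $\{0,1\}^n$. A code on $n$ cells consists, for each write $i\ge1$, of a real $R_i\ge0$, an encoder $\mathcal{E}_i:\{1,\ldots,\lfloor2^{nR_i}\rfloor\}\times\{0,1\}^n\to\{0,1\}^n$ and decoder $\mathcal{D}_i$ with $\mathcal{D}_i(\mathcal{E}_i(m,\mathbf{u}))=m$ (both may depend on $i$). Starting from $\mathbf{v}_0=\mathbf{0}$, messages produce states $\mathbf{v}_i=\mathcal{E}_i(m_i,\mathbf{v}_{i-1})$. The code is $(\alpha,\beta,p)$-constrained if for every message sequence, every $i\ge0$ and every $1\le j\le n-\beta+1$, $|\{(k,\ell): v_{i+k,j+\ell}\ne v_{i+k+1,j+\ell}, 0\le k<\alpha, 0\le\ell<\beta\}|\le p$ (total rewrite cost, measured by Hamming distance between consecutive states, of any $\beta$ contiguous cells over any $\alpha$ consecutive rewrites is at most $p$). Rate: $\lim_{m\to\infty}\frac1m\sum_{i=1}^mR_i$. $C_n(\alpha,\beta,p)$ is the supremum of rates of $(\alpha,\beta,p)$-constrained codes on $n$ cells and $C(\alpha,\beta,p)=\lim_{n\to\infty}C_n(\alpha,\beta,p)$. *)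

theory Defs
  imports Complex_Main
begin

text \<open>Cell-state vectors of n binary cells are modelled as functions nat \<Rightarrow> bool
  (cell j, 0-indexed) that are False at every index j \<ge> n.\<close>

definition states :: "nat \<Rightarrow> (nat \<Rightarrow> bool) set" where
  "states n = {v. \<forall>j\<ge>n. \<not> v j}"

definition nmsg :: "nat \<Rightarrow> real \<Rightarrow> nat" where
  "nmsg n r = nat \<lfloor>2 powr (real n * r)\<rfloor>"

definition is_code :: "nat \<Rightarrow> (nat \<Rightarrow> real) \<Rightarrow> (nat \<Rightarrow> nat \<Rightarrow> (nat \<Rightarrow> bool) \<Rightarrow> (nat \<Rightarrow> bool))
    \<Rightarrow> (nat \<Rightarrow> (nat \<Rightarrow> bool) \<Rightarrow> nat) \<Rightarrow> bool" where
  "is_code n R E D \<longleftrightarrow>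
     (\<forall>i\<ge>1. R i \<ge> 0 \<and>
        (\<forall>m \<in> {1..nmsg n (R i)}. \<forall>u \<in> states n. E i m u \<in> states n \<and> D i (E i m u) = m))"

fun state_seq :: "(nat \<Rightarrow> nat \<Rightarrow> (nat \<Rightarrow> bool) \<Rightarrow> (nat \<Rightarrow> bool)) \<Rightarrow> (nat \<Rightarrow> nat) \<Rightarrow> nat \<Rightarrow> (nat \<Rightarrow> bool)" where
  "state_seq E ms 0 = (\<lambda>_. False)"
| "state_seq E ms (Suc i) = E (Suc i) (ms (Suc i)) (state_seq E ms i)"

definition constrained :: "nat \<Rightarrow> nat \<Rightarrow> nat \<Rightarrow> nat \<Rightarrow> (nat \<Rightarrow> real)
    \<Rightarrow> (nat \<Rightarrow> nat \<Rightarrow> (nat \<Rightarrow> bool) \<Rightarrow> (nat \<Rightarrow> bool)) \<Rightarrow> bool" where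
  "constrained n \<alpha> \<beta> p R E \<longleftrightarrow>
     (\<forall>ms. (\<forall>i\<ge>1. ms i \<in> {1..nmsg n (R i)}) \<longrightarrow>
        (\<forall>i j. j + \<beta> \<le> n \<longrightarrow>
           card {(k, l). k < \<alpha> \<and> l < \<beta> \<and>
                 state_seq E ms (i + k) (j + l) \<noteq> state_seq E ms (i + k + 1) (j + l)} \<le> p))"

definition has_rate :: "(nat \<Rightarrow> real) \<Rightarrow> real \<Rightarrow> bool" where
  "has_rate R r \<longleftrightarrow> (\<lambda>m. (\<Sum>i=1..m. R i) / real m) \<longlonglongrightarrow> r"

definition Cn :: "nat \<Rightarrow> nat \<Rightarrow> nat \<Rightarrow> nat \<Rightarrow> real" where
  "Cn \<alpha> \<beta> p n = Sup {r. \<exists>R E D. is_code n R E D \<and> constrained n \<alpha> \<beta> p R E \<and> has_rate R r}"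

definition Ccap :: "nat \<Rightarrow> nat \<Rightarrow> nat \<Rightarrow> real" where
  "Ccap \<alpha> \<beta> p = lim (\<lambda>n. Cn \<alpha> \<beta> p n)"

end

theory Submission
  imports Defs "HOL-Analysis.Analysis"
begin

text \<open>Both bounds come from explicit transformations of codes. A (1,\<beta>,p)-constrained code
  used only at every \<alpha>-th write is (\<alpha>,\<beta>,p)-constrained, because any \<alpha> consecutive writes
  contain at most one real write; this divides the rate by \<alpha>. An (\<alpha>,1,p)-constrained code on
  n cells written onto every \<beta>-th cell of \<beta>n cells is (\<alpha>,\<beta>,p)-constrained, because every
  window of \<beta> cells contains exactly one used cell; this divides the rate by \<beta>. Passing to
  the limit gives the theorem, once the limits defining C are known to exist. That is the
  substantial part: running N div (m + \<beta>) copies of an m-cell code side by side, separated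
  by gaps of \<beta> cells, shows C_N \<ge> C_m - (2\<beta> + 1)/m - 2m/N, and convergence follows by a
  Fekete-type argument. Rounding the message counts costs one bit per copy, and the rates of the
  product code have to be smoothed so that their averages converge.\<close>

section \<open>Achievable rates\<close>

lemma nmsg_0 [simp]: "nmsg n 0 = 1"
  by (simp add: nmsg_def)

lemma nmsg_ge_1: "r \<ge> 0 \<Longrightarrow> nmsg n r \<ge> 1"
  unfolding nmsg_def by (simp add: ge_one_powr_ge_zero le_nat_floor)

lemma zero_in_states [simp]: "(\<lambda>_. False) \<in> states n"
  by (simp add: states_def)

lemma states_subset_image_Pow: "states n \<subseteq> (\<lambda>S j. j \<in> S) ` Pow {..<n}"
proof
  fix v assume "v \<in> states n"
  hence "{j. v j} \<in> Pow {..<n}" by (auto simp: states_def not_le[symmetric])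
  thus "v \<in> (\<lambda>S j. j \<in> S) ` Pow {..<n}" by (intro image_eqI[of _ _ "{j. v j}"]) auto
qed

lemma finite_states: "finite (states n)"
  using states_subset_image_Pow finite_subset by blast

lemma card_states_le: "card (states n) \<le> 2 ^ n"
  using surj_card_le[OF _ states_subset_image_Pow] by (simp add: card_Pow)

lemma code_nmsg_le:
  assumes "is_code n R E D" "i \<ge> 1"
  shows "nmsg n (R i) \<le> 2 ^ n"
proof -
  have "inj_on (\<lambda>m. E i m (\<lambda>_. False)) {1..nmsg n (R i)}"
    by (rule inj_onI) (metis assms is_code_def zero_in_states)
  moreover have "(\<lambda>m. E i m (\<lambda>_. False)) ` {1..nmsg n (R i)} \<subseteq> states n"
    using assms by (auto simp: is_code_def)
  ultimately show ?thesis
    using card_inj_on_le[OF _ _ finite_states] card_states_le by (metis card_atLeastAtMost diff_Suc_1 order_trans)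
qed

lemma code_rate_le_2:
  assumes "is_code n R E D" "i \<ge> 1" "n \<ge> 1"
  shows "R i \<le> 2"
proof (rule ccontr)
  assume "\<not> R i \<le> 2"
  hence "real n * 2 \<le> real n * R i" by (intro mult_left_mono) auto
  hence "real n + 1 \<le> real n * R i" using assms(3) by linarith
  hence "2 powr (real n + 1) \<le> 2 powr (real n * R i)" by simp
  moreover have "2 powr (real n + 1) = 2 * 2 ^ n" by (simp add: powr_add powr_realpow)
  ultimately have "2 * 2 ^ n - 1 \<le> real (nmsg n (R i))" unfolding nmsg_def by linarith
  moreover have "real (nmsg n (R i)) \<le> 2 ^ n"
    using code_nmsg_le[OF assms(1,2)] by (metis of_nat_le_iff of_nat_numeral of_nat_power)
  moreover have "(2::real) \<le> 2 ^ n" using power_increasing[of 1 n "2::real"] assms(3) by simp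
  ultimately show False by linarith
qed

definition valid_msgs :: "nat \<Rightarrow> (nat \<Rightarrow> real) \<Rightarrow> (nat \<Rightarrow> nat) \<Rightarrow> bool" where
  "valid_msgs n R ms \<longleftrightarrow> (\<forall>i\<ge>1. ms i \<in> {1..nmsg n (R i)})"

definition window_changes :: "(nat \<Rightarrow> nat \<Rightarrow> bool) \<Rightarrow> nat \<Rightarrow> nat \<Rightarrow> nat \<Rightarrow> nat \<Rightarrow> (nat \<times> nat) set" where
  "window_changes v \<alpha> \<beta> i j = {(k, l). k < \<alpha> \<and> l < \<beta> \<and> v (i + k) (j + l) \<noteq> v (i + k + 1) (j + l)}"

lemma constrained_iff:
  "constrained n \<alpha> \<beta> p R E \<longleftrightarrow>
     (\<forall>ms. valid_msgs n R ms \<longrightarrow>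
        (\<forall>i j. j + \<beta> \<le> n \<longrightarrow> card (window_changes (state_seq E ms) \<alpha> \<beta> i j) \<le> p))"
  by (simp add: constrained_def valid_msgs_def window_changes_def)

lemma finite_window_changes: "finite (window_changes v \<alpha> \<beta> i j)"
  by (rule finite_subset[of _ "{..<\<alpha>} \<times> {..<\<beta>}"]) (auto simp: window_changes_def)

lemma state_seq_in_states:
  assumes "is_code n R E D" "valid_msgs n R ms"
  shows "state_seq E ms i \<in> states n"
  by (induction i) (use assms in \<open>auto simp: is_code_def valid_msgs_def\<close>)

lemma has_rate_bounds:
  assumes "has_rate R r" "\<And>i. i \<ge> 1 \<Longrightarrow> a \<le> R i \<and> R i \<le> b"
  shows "a \<le> r \<and> r \<le> b"
proof -
  have avg: "a \<le> (\<Sum>i=1..n. R i) / real n \<and> (\<Sum>i=1..n. R i) / real n \<le> b" if "n \<ge> 1" for n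
  proof -
    have "real (card {1..n}) * a \<le> (\<Sum>i=1..n. R i)" "(\<Sum>i=1..n. R i) \<le> real (card {1..n}) * b"
      by (rule sum_bounded_below sum_bounded_above; use assms(2) in simp)+
    thus ?thesis using that by (simp add: field_simps)
  qed
  have lim: "(\<lambda>n. (\<Sum>i=1..n. R i) / real n) \<longlonglongrightarrow> r" using assms(1) by (simp add: has_rate_def)
  show ?thesis
    using LIMSEQ_le_const[OF lim, of a] LIMSEQ_le_const2[OF lim, of b] avg by blast
qed

lemma has_rate_affine:
  assumes "has_rate R r"
  shows "has_rate (\<lambda>i. c * (a * R i - d)) (c * (a * r - d))"
proof -
  have "(\<lambda>n. c * (a * ((\<Sum>i=1..n. R i) / real n) - d)) \<longlonglongrightarrow> c * (a * r - d)"
    using assms unfolding has_rate_def by (intro tendsto_intros)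
  moreover have "\<forall>\<^sub>F n in sequentially.
      c * (a * ((\<Sum>i=1..n. R i) / real n) - d) = (\<Sum>i=1..n. c * (a * R i - d)) / real n"
  proof (rule eventually_sequentiallyI[of 1])
    fix n :: nat assume "n \<ge> 1"
    have "(\<Sum>i=1..n. c * (a * R i - d)) = c * (a * (\<Sum>i=1..n. R i) - real n * d)"
      by (simp add: sum_subtractf sum_distrib_left right_diff_distrib mult.assoc)
    with \<open>n \<ge> 1\<close> show "c * (a * ((\<Sum>i=1..n. R i) / real n) - d) = (\<Sum>i=1..n. c * (a * R i - d)) / real n"
      by (simp add: field_simps)
  qed
  ultimately show ?thesis unfolding has_rate_def by (rule Lim_transform_eventually)
qed

lemma has_rate_divide: "has_rate R r \<Longrightarrow> has_rate (\<lambda>i. R i / c) (r / c)"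
  using has_rate_affine[of R r "1 / c" 1 0] by simp

definition achievable_rates :: "nat \<Rightarrow> nat \<Rightarrow> nat \<Rightarrow> nat \<Rightarrow> real set" where
  "achievable_rates \<alpha> \<beta> p n = {r. \<exists>R E D. is_code n R E D \<and> constrained n \<alpha> \<beta> p R E \<and> has_rate R r}"

lemma Cn_eq_Sup: "Cn \<alpha> \<beta> p n = Sup (achievable_rates \<alpha> \<beta> p n)"
  by (simp add: Cn_def achievable_rates_def)

lemma zero_in_achievable_rates: "0 \<in> achievable_rates \<alpha> \<beta> p n"
proof -
  have "state_seq (\<lambda>i m u. u) ms i = (\<lambda>_. False)" for ms i
    by (induction i) auto
  hence "is_code n (\<lambda>_. 0) (\<lambda>i m u. u) (\<lambda>i v. 1) \<and> constrained n \<alpha> \<beta> p (\<lambda>_. 0) (\<lambda>i m u. u)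
      \<and> has_rate (\<lambda>_. 0) 0"
    by (simp add: is_code_def constrained_def has_rate_def)
  thus ?thesis unfolding achievable_rates_def by blast
qed

lemma achievable_rate_bounds:
  assumes "r \<in> achievable_rates \<alpha> \<beta> p n" "n \<ge> 1"
  shows "0 \<le> r \<and> r \<le> 2"
proof -
  obtain R E D where "is_code n R E D" "has_rate R r"
    using assms(1) by (auto simp: achievable_rates_def)
  moreover have "0 \<le> R i \<and> R i \<le> 2" if "i \<ge> 1" for i
    using code_rate_le_2[OF \<open>is_code n R E D\<close> that assms(2)] \<open>is_code n R E D\<close> that
    by (simp add: is_code_def)
  ultimately show ?thesis using has_rate_bounds by blast
qed

lemma bdd_above_achievable_rates: "n \<ge> 1 \<Longrightarrow> bdd_above (achievable_rates \<alpha> \<beta> p n)"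
  using achievable_rate_bounds by (meson bdd_aboveI)

lemma achievable_rate_le_Cn: "r \<in> achievable_rates \<alpha> \<beta> p n \<Longrightarrow> n \<ge> 1 \<Longrightarrow> r \<le> Cn \<alpha> \<beta> p n"
  unfolding Cn_eq_Sup by (rule cSup_upper) (auto intro: bdd_above_achievable_rates)

lemma Cn_le: "(\<And>r. r \<in> achievable_rates \<alpha> \<beta> p n \<Longrightarrow> r \<le> z) \<Longrightarrow> Cn \<alpha> \<beta> p n \<le> z"
  unfolding Cn_eq_Sup by (rule cSup_least) (use zero_in_achievable_rates[of \<alpha> \<beta> p n] in auto)

lemma Cn_bounds: "n \<ge> 1 \<Longrightarrow> 0 \<le> Cn \<alpha> \<beta> p n \<and> Cn \<alpha> \<beta> p n \<le> 2"
  using achievable_rate_le_Cn[OF zero_in_achievable_rates] Cn_le achievable_rate_bounds by blast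

section \<open>Stretching a code in time\<close>

definition stretch_rates :: "nat \<Rightarrow> (nat \<Rightarrow> real) \<Rightarrow> nat \<Rightarrow> real" where
  "stretch_rates \<alpha> R i = (if \<alpha> dvd i then R (i div \<alpha>) else 0)"

definition stretch_enc ::
    "nat \<Rightarrow> (nat \<Rightarrow> nat \<Rightarrow> (nat \<Rightarrow> bool) \<Rightarrow> (nat \<Rightarrow> bool)) \<Rightarrow> nat \<Rightarrow> nat \<Rightarrow> (nat \<Rightarrow> bool) \<Rightarrow> (nat \<Rightarrow> bool)" where
  "stretch_enc \<alpha> E i w u = (if \<alpha> dvd i then E (i div \<alpha>) w u else u)"

definition stretch_dec :: "nat \<Rightarrow> (nat \<Rightarrow> (nat \<Rightarrow> bool) \<Rightarrow> nat) \<Rightarrow> nat \<Rightarrow> (nat \<Rightarrow> bool) \<Rightarrow> nat" where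
  "stretch_dec \<alpha> D i v = (if \<alpha> dvd i then D (i div \<alpha>) v else 1)"

lemma div_ge_1_if_dvd: "\<alpha> dvd i \<Longrightarrow> i \<ge> 1 \<Longrightarrow> i div \<alpha> \<ge> (1::nat)"
  by (metis One_nat_def dvd_div_eq_0_iff le_zero_eq not_less_eq_eq less_one)

lemma Suc_div_eq: "Suc x div \<alpha> = (if \<alpha> dvd Suc x then Suc (x div \<alpha>) else x div \<alpha>)"
  by (simp add: div_Suc dvd_eq_mod_eq_0)

lemma is_code_stretch:
  assumes "is_code n R E D"
  shows "is_code n (stretch_rates \<alpha> R) (stretch_enc \<alpha> E) (stretch_dec \<alpha> D)"
  using assms div_ge_1_if_dvd
  by (auto simp: is_code_def stretch_rates_def stretch_enc_def stretch_dec_def)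

lemma valid_msgs_stretch:
  assumes "\<alpha> > 0" "valid_msgs n (stretch_rates \<alpha> R) ms"
  shows "valid_msgs n R (\<lambda>q. ms (\<alpha> * q))"
  unfolding valid_msgs_def
proof (intro allI impI)
  fix q :: nat assume "q \<ge> 1"
  hence "\<alpha> * q \<ge> 1" using assms(1) by (simp add: Suc_le_eq)
  thus "ms (\<alpha> * q) \<in> {1..nmsg n (R q)}"
    using assms(2)[unfolded valid_msgs_def, rule_format, of "\<alpha> * q"] assms(1)
    by (simp add: stretch_rates_def)
qed

lemma state_seq_stretch:
  assumes "\<alpha> > 0"
  shows "state_seq (stretch_enc \<alpha> E) ms x = state_seq E (\<lambda>q. ms (\<alpha> * q)) (x div \<alpha>)"
proof (induction x)
  case (Suc x)
  have "\<alpha> * Suc (x div \<alpha>) = Suc x" if "\<alpha> dvd Suc x"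
    using that Suc_div_eq[of x] by (metis dvd_mult_div_cancel)
  with Suc show ?case by (simp add: stretch_enc_def Suc_div_eq)
qed simp

text \<open>Slowing a sequence down by a factor \<alpha> leaves at most one changing step in any \<alpha>
  consecutive steps, namely the one where \<open>x div \<alpha>\<close> increases.\<close>
lemma window_changes_slow_down:
  assumes "\<alpha> > 0"
  shows "window_changes (\<lambda>x. w (x div \<alpha>)) \<alpha> \<beta> i j
    \<subseteq> (\<lambda>(_, l). (\<alpha> * (i div \<alpha>) + \<alpha> - 1 - i, l)) ` window_changes w 1 \<beta> (i div \<alpha>) j"
proof clarify
  fix k l assume "(k, l) \<in> window_changes (\<lambda>x. w (x div \<alpha>)) \<alpha> \<beta> i j"
  hence k: "k < \<alpha>" and l: "l < \<beta>"
    and ne: "w ((i + k) div \<alpha>) (j + l) \<noteq> w (Suc (i + k) div \<alpha>) (j + l)"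
    by (auto simp: window_changes_def)
  define q where "q = i div \<alpha>"
  have "\<alpha> dvd Suc (i + k)" using ne Suc_div_eq[of "i + k"] by (auto split: if_splits)
  then obtain d where d: "Suc (i + k) = \<alpha> * d" by blast
  have iq: "i = \<alpha> * q + i mod \<alpha>" and "i mod \<alpha> < \<alpha>" using assms by (simp_all add: q_def)
  hence "\<alpha> * q < \<alpha> * d" "\<alpha> * d < \<alpha> * q + \<alpha> * 2" using d k by linarith+
  hence "\<alpha> * q < \<alpha> * d" "\<alpha> * d < \<alpha> * (q + 2)" by (simp_all only: distrib_left)
  hence "q < d" "d < q + 2" using mult_less_cancel1 by blast+
  hence "d = q + 1" by simp
  hence "k = \<alpha> * q + \<alpha> - 1 - i" and "(i + k) div \<alpha> = q" and "Suc (i + k) div \<alpha> = q + 1"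
    using d assms iq by (simp_all add: algebra_simps div_nat_eqI)
  with ne l show "(k, l) \<in> (\<lambda>(_, l). (\<alpha> * (i div \<alpha>) + \<alpha> - 1 - i, l)) ` window_changes w 1 \<beta> (i div \<alpha>) j"
    by (intro image_eqI[of _ _ "(0, l)"]) (auto simp: window_changes_def q_def)
qed

lemma constrained_stretch:
  assumes "\<alpha> > 0" "constrained n 1 \<beta> p R E"
  shows "constrained n \<alpha> \<beta> p (stretch_rates \<alpha> R) (stretch_enc \<alpha> E)"
  unfolding constrained_iff
proof (intro allI impI)
  fix ms i j assume "valid_msgs n (stretch_rates \<alpha> R) ms" "j + \<beta> \<le> n"
  with assms have "card (window_changes (state_seq E (\<lambda>q. ms (\<alpha> * q))) 1 \<beta> (i div \<alpha>) j) \<le> p"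
    using valid_msgs_stretch by (simp add: constrained_iff)
  moreover have "state_seq (stretch_enc \<alpha> E) ms = (\<lambda>x. state_seq E (\<lambda>q. ms (\<alpha> * q)) (x div \<alpha>))"
    using state_seq_stretch[OF assms(1)] by auto
  moreover note surj_card_le[OF finite_window_changes window_changes_slow_down[OF assms(1)],
      of "state_seq E (\<lambda>q. ms (\<alpha> * q))" \<beta> i j]
  ultimately show "card (window_changes (state_seq (stretch_enc \<alpha> E) ms) \<alpha> \<beta> i j) \<le> p"
    by simp
qed

lemma tendsto_real_div_over_self:
  assumes "\<alpha> > 0"
  shows "(\<lambda>x. real (x div \<alpha>) / real x) \<longlonglongrightarrow> 1 / real \<alpha>"
proof (rule tendsto_sandwich[of "\<lambda>x. 1 / real \<alpha> - 1 / real x" _ _ "\<lambda>_. 1 / real \<alpha>"])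
  show "\<forall>\<^sub>F x in sequentially. 1 / real \<alpha> - 1 / real x \<le> real (x div \<alpha>) / real x"
  proof (rule eventually_sequentiallyI[of 1])
    fix x :: nat assume x: "x \<ge> 1"
    have "real x \<le> real \<alpha> * real (x div \<alpha>) + real \<alpha>"
      using mod_less_divisor[OF assms, of x] div_mult_mod_eq[of x \<alpha>]
      by (metis add_le_mono le_refl less_imp_le_nat mult.commute of_nat_add of_nat_le_iff of_nat_mult)
    hence "(real x / real \<alpha> - 1) / real x \<le> real (x div \<alpha>) / real x"
      using x assms by (intro divide_right_mono) (auto simp: field_simps)
    moreover have "(real x / real \<alpha> - 1) / real x = 1 / real \<alpha> - 1 / real x"
      using x assms by (simp add: field_simps)
    ultimately show "1 / real \<alpha> - 1 / real x \<le> real (x div \<alpha>) / real x" by simp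
  qed
  have "real \<alpha> * real (x div \<alpha>) \<le> real x" for x
    by (metis of_nat_le_iff of_nat_mult times_div_less_eq_dividend)
  with assms show "\<forall>\<^sub>F x in sequentially. real (x div \<alpha>) / real x \<le> 1 / real \<alpha>"
    by (intro eventually_sequentiallyI[of 1]) (simp add: field_simps)
  show "(\<lambda>x. 1 / real \<alpha> - 1 / real x) \<longlonglongrightarrow> 1 / real \<alpha>"
    using tendsto_diff[OF tendsto_const lim_1_over_n, of "1 / real \<alpha>"] by simp
qed simp

lemma filterlim_div_sequentially: "\<alpha> > 0 \<Longrightarrow> filterlim (\<lambda>x. x div \<alpha>) sequentially sequentially"
  unfolding filterlim_at_top
  by (metis div_le_mono eventually_sequentiallyI nonzero_mult_div_cancel_right not_gr0)

lemma has_rate_stretch: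
  assumes "\<alpha> > 0" "has_rate R r"
  shows "has_rate (stretch_rates \<alpha> R) (r / real \<alpha>)"
proof -
  define A where "A q = (\<Sum>i=1..q. R i) / real q" for q
  have sum_eq: "(\<Sum>i=1..x. stretch_rates \<alpha> R i) = (\<Sum>i=1..x div \<alpha>. R i)" for x
    by (induction x) (auto simp: stretch_rates_def Suc_div_eq)
  have "(\<lambda>x. (\<Sum>i=1..x. stretch_rates \<alpha> R i) / real x) = (\<lambda>x. A (x div \<alpha>) * (real (x div \<alpha>) / real x))"
  proof
    fix x show "(\<Sum>i=1..x. stretch_rates \<alpha> R i) / real x = A (x div \<alpha>) * (real (x div \<alpha>) / real x)"
      unfolding sum_eq A_def by (cases "x div \<alpha> = 0") (auto simp: field_simps)
  qed
  moreover have "A \<longlonglongrightarrow> r" using assms(2) unfolding has_rate_def A_def[abs_def] .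
  hence "(\<lambda>x. A (x div \<alpha>)) \<longlonglongrightarrow> r"
    by (rule filterlim_compose[OF _ filterlim_div_sequentially[OF assms(1)]])
  hence "(\<lambda>x. A (x div \<alpha>) * (real (x div \<alpha>) / real x)) \<longlonglongrightarrow> r * (1 / real \<alpha>)"
    using tendsto_real_div_over_self[OF assms(1)] by (rule tendsto_mult)
  ultimately show ?thesis unfolding has_rate_def by simp
qed

lemma stretch_rate_achievable:
  assumes "\<alpha> > 0" "r \<in> achievable_rates 1 \<beta> p n"
  shows "r / real \<alpha> \<in> achievable_rates \<alpha> \<beta> p n"
proof -
  obtain R E D where "is_code n R E D" "constrained n 1 \<beta> p R E" "has_rate R r"
    using assms(2) by (auto simp: achievable_rates_def)
  with assms(1) have "is_code n (stretch_rates \<alpha> R) (stretch_enc \<alpha> E) (stretch_dec \<alpha> D)"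
    "constrained n \<alpha> \<beta> p (stretch_rates \<alpha> R) (stretch_enc \<alpha> E)"
    "has_rate (stretch_rates \<alpha> R) (r / real \<alpha>)"
    by (simp_all add: is_code_stretch constrained_stretch has_rate_stretch)
  thus ?thesis unfolding achievable_rates_def by blast
qed

section \<open>Spreading a code in space\<close>

definition spread :: "nat \<Rightarrow> (nat \<Rightarrow> bool) \<Rightarrow> nat \<Rightarrow> bool" where
  "spread \<beta> v x \<longleftrightarrow> x mod \<beta> = 0 \<and> v (x div \<beta>)"

definition gather :: "nat \<Rightarrow> nat \<Rightarrow> (nat \<Rightarrow> bool) \<Rightarrow> nat \<Rightarrow> bool" where
  "gather m \<beta> u j \<longleftrightarrow> j < m \<and> u (\<beta> * j)"

definition spread_enc ::
    "nat \<Rightarrow> nat \<Rightarrow> (nat \<Rightarrow> nat \<Rightarrow> (nat \<Rightarrow> bool) \<Rightarrow> (nat \<Rightarrow> bool)) \<Rightarrow> nat \<Rightarrow> nat \<Rightarrow> (nat \<Rightarrow> bool) \<Rightarrow> (nat \<Rightarrow> bool)" where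
  "spread_enc m \<beta> E i w u = spread \<beta> (E i w (gather m \<beta> u))"

definition spread_dec :: "nat \<Rightarrow> nat \<Rightarrow> (nat \<Rightarrow> (nat \<Rightarrow> bool) \<Rightarrow> nat) \<Rightarrow> nat \<Rightarrow> (nat \<Rightarrow> bool) \<Rightarrow> nat" where
  "spread_dec m \<beta> D i v = D i (gather m \<beta> v)"

lemma gather_in_states: "gather m \<beta> u \<in> states m"
  by (simp add: gather_def states_def)

lemma spread_in_states:
  assumes "\<beta> > 0" "v \<in> states m"
  shows "spread \<beta> v \<in> states (\<beta> * m)"
proof -
  have "\<not> spread \<beta> v x" if "x \<ge> \<beta> * m" for x
  proof -
    have "m \<le> x div \<beta>" using div_le_mono[OF that, of \<beta>] assms(1) by simp
    thus ?thesis using assms(2) by (simp add: spread_def states_def)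
  qed
  thus ?thesis by (simp add: states_def)
qed

lemma gather_spread:
  assumes "\<beta> > 0" "v \<in> states m"
  shows "gather m \<beta> (spread \<beta> v) = v"
proof
  fix j show "gather m \<beta> (spread \<beta> v) j = v j"
    using assms by (cases "j < m") (simp_all add: gather_def spread_def states_def)
qed

lemma nmsg_scale: "\<beta> > 0 \<Longrightarrow> nmsg (\<beta> * m) (r / real \<beta>) = nmsg m r"
  by (simp add: nmsg_def)

lemma is_code_spread:
  assumes "\<beta> > 0" "is_code m R E D"
  shows "is_code (\<beta> * m) (\<lambda>i. R i / real \<beta>) (spread_enc m \<beta> E) (spread_dec m \<beta> D)"
  using assms gather_in_states spread_in_states gather_spread
  by (simp add: is_code_def nmsg_scale spread_enc_def spread_dec_def)

lemma state_seq_spread: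
  assumes "\<beta> > 0" "is_code m R E D" "valid_msgs m R ms"
  shows "state_seq (spread_enc m \<beta> E) ms n = spread \<beta> (state_seq E ms n)"
proof (induction n)
  case 0 show ?case by (simp add: spread_def fun_eq_iff)
next
  case (Suc n) with assms show ?case
    by (simp add: spread_enc_def gather_spread state_seq_in_states)
qed

text \<open>The only cell of a window of \<beta> cells of a spread state that can change is the multiple of
  \<beta> in it; it carries the value of cell \<open>(j + \<beta> - 1) div \<beta>\<close> of the original state.\<close>
lemma window_changes_spread:
  fixes \<beta> j :: nat
  assumes "\<beta> > 0"
  defines "c \<equiv> (j + \<beta> - 1) div \<beta>"
  shows "window_changes (\<lambda>n. spread \<beta> (v n)) \<alpha> \<beta> i j
    \<subseteq> (\<lambda>(k, _). (k, \<beta> * c - j)) ` window_changes v \<alpha> 1 i c"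
proof clarify
  fix k l assume "(k, l) \<in> window_changes (\<lambda>n. spread \<beta> (v n)) \<alpha> \<beta> i j"
  hence k: "k < \<alpha>" and l: "l < \<beta>" and "(j + l) mod \<beta> = 0"
    and ne: "v (i + k) ((j + l) div \<beta>) \<noteq> v (i + k + 1) ((j + l) div \<beta>)"
    by (auto simp: window_changes_def spread_def)
  then obtain q where q: "j + l = \<beta> * q" by (metis dvd_eq_mod_eq_0 dvd_def)
  have "c = q" unfolding c_def
    by (rule div_nat_eqI) (use q l assms(1) in \<open>linarith, simp\<close>)
  moreover from q have "(j + l) div \<beta> = q" using assms(1) by simp
  moreover from \<open>c = q\<close> have "l = \<beta> * c - j" by (simp flip: q)
  ultimately show "(k, l) \<in> (\<lambda>(k, _). (k, \<beta> * c - j)) ` window_changes v \<alpha> 1 i c"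
    using k ne by (intro image_eqI[of _ _ "(k, 0)"]) (auto simp: window_changes_def)
qed

lemma constrained_spread:
  assumes "\<beta> > 0" "is_code m R E D" "constrained m \<alpha> 1 p R E"
  shows "constrained (\<beta> * m) \<alpha> \<beta> p (\<lambda>i. R i / real \<beta>) (spread_enc m \<beta> E)"
  unfolding constrained_iff
proof (intro allI impI)
  fix ms i j assume valid: "valid_msgs (\<beta> * m) (\<lambda>i. R i / real \<beta>) ms"
  hence valid': "valid_msgs m R ms" using assms(1) by (simp add: valid_msgs_def nmsg_scale)
  define c where "c = (j + \<beta> - 1) div \<beta>"
  have card_le: "card (window_changes (state_seq E ms) \<alpha> 1 i c) \<le> p"
  proof (cases "c < m")
    case True with assms(3) valid' show ?thesis by (simp add: constrained_iff)
  next
    case False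
    have "\<not> state_seq E ms n c" for n
      using state_seq_in_states[OF assms(2) valid', of n] False by (simp add: states_def)
    hence "window_changes (state_seq E ms) \<alpha> 1 i c = {}"
      by (auto simp: window_changes_def simp del: state_seq.simps)
    thus ?thesis by simp
  qed
  have "state_seq (spread_enc m \<beta> E) ms = (\<lambda>n. spread \<beta> (state_seq E ms n))"
    by (rule ext) (rule state_seq_spread[OF assms(1,2) valid'])
  thus "card (window_changes (state_seq (spread_enc m \<beta> E) ms) \<alpha> \<beta> i j) \<le> p"
    using surj_card_le[OF finite_window_changes window_changes_spread[OF assms(1)]] card_le
    unfolding c_def by (metis (no_types) order_trans)
qed

lemma spread_rate_achievable:
  assumes "\<beta> > 0" "r \<in> achievable_rates \<alpha> 1 p m"
  shows "r / real \<beta> \<in> achievable_rates \<alpha> \<beta> p (\<beta> * m)"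
proof -
  obtain R E D where "is_code m R E D" "constrained m \<alpha> 1 p R E" "has_rate R r"
    using assms(2) by (auto simp: achievable_rates_def)
  with assms(1) have "is_code (\<beta> * m) (\<lambda>i. R i / real \<beta>) (spread_enc m \<beta> E) (spread_dec m \<beta> D)"
    "constrained (\<beta> * m) \<alpha> \<beta> p (\<lambda>i. R i / real \<beta>) (spread_enc m \<beta> E)"
    "has_rate (\<lambda>i. R i / real \<beta>) (r / real \<beta>)"
    by (simp_all add: is_code_spread constrained_spread has_rate_divide)
  thus ?thesis unfolding achievable_rates_def by blast
qed

section \<open>Side-by-side block codes\<close>

lemma eventually_all_le_sublinear:
  fixes e :: "nat \<Rightarrow> real"
  assumes "(\<lambda>n. e n / real n) \<longlonglongrightarrow> 0" "\<epsilon> > 0"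
  shows "\<exists>N. \<forall>n\<ge>N. \<forall>j\<le>n. e j \<le> \<epsilon> * real n"
proof -
  obtain J where J: "\<forall>j\<ge>J. \<bar>e j / real j\<bar> < \<epsilon>"
    using assms unfolding LIMSEQ_def dist_real_def by auto
  define K where "K = (\<Sum>j\<le>J. \<bar>e j\<bar>)"
  have small: "e j \<le> K" if "j \<le> J" for j
    unfolding K_def using that member_le_sum[of j "{..J}" "\<lambda>j. \<bar>e j\<bar>"] by auto
  have large: "e j \<le> \<epsilon> * real j" if "j > J" for j
  proof -
    have "\<bar>e j\<bar> / real j < \<epsilon>" "real j > 0" using J that by auto
    thus ?thesis by (simp add: field_simps)
  qed
  show ?thesis
  proof (intro exI allI impI)
    fix n j assume n: "n \<ge> max (Suc J) (nat \<lceil>K / \<epsilon>\<rceil> + 1)" and j: "j \<le> n"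
    have "real (nat \<lceil>K / \<epsilon>\<rceil> + 1) \<le> real n" using n by (intro of_nat_mono) simp
    hence "K / \<epsilon> < real n" using real_nat_ceiling_ge[of "K / \<epsilon>"] by simp
    hence "K < \<epsilon> * real n" using assms(2) by (simp add: field_simps)
    moreover have "\<epsilon> * real j \<le> \<epsilon> * real n" using j assms(2) by simp
    ultimately show "e j \<le> \<epsilon> * real n"
      using small[of j] large[of j] by (cases "j \<le> J") auto
  qed
qed

lemma tendsto_averages_if_close_below:
  fixes B e :: "nat \<Rightarrow> real"
  assumes B_le: "\<And>n. B n \<le> t * real n" and B_ge: "\<And>n. \<exists>j\<le>n. t * real n + e n - e j \<le> B n"
    and e_lim: "(\<lambda>n. e n / real n) \<longlonglongrightarrow> 0"
  shows "(\<lambda>n. B n / real n) \<longlonglongrightarrow> t"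
proof (rule LIMSEQ_I)
  fix \<epsilon> :: real assume "\<epsilon> > 0"
  obtain N1 where N1: "\<forall>n\<ge>N1. \<forall>j\<le>n. e j \<le> \<epsilon> / 3 * real n"
    using eventually_all_le_sublinear[OF e_lim, of "\<epsilon> / 3"] \<open>\<epsilon> > 0\<close> by auto
  obtain N2 where N2: "\<forall>n\<ge>N2. \<forall>j\<le>n. - e j \<le> \<epsilon> / 3 * real n"
    using eventually_all_le_sublinear[of "\<lambda>n. - e n", of "\<epsilon> / 3"] tendsto_minus[OF e_lim] \<open>\<epsilon> > 0\<close>
    by auto
  show "\<exists>N. \<forall>n\<ge>N. norm (B n / real n - t) < \<epsilon>"
  proof (intro exI allI impI)
    fix n assume n: "n \<ge> max 1 (max N1 N2)"
    obtain j where "j \<le> n" "t * real n + e n - e j \<le> B n" using B_ge by blast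
    moreover have "e j \<le> \<epsilon> / 3 * real n" "- e n \<le> \<epsilon> / 3 * real n"
      using N1 N2 n \<open>j \<le> n\<close> by auto
    ultimately have "(t - 2 * (\<epsilon> / 3)) * real n \<le> B n" by (simp add: algebra_simps)
    moreover have "real n > 0" using n by simp
    ultimately have "t - 2 * (\<epsilon> / 3) \<le> B n / real n" "B n / real n \<le> t"
      using B_le[of n] by (simp_all add: field_simps)
    thus "norm (B n / real n - t) < \<epsilon>" using \<open>\<epsilon> > 0\<close> by simp
  qed
qed

definition capped_sums :: "(nat \<Rightarrow> real) \<Rightarrow> real \<Rightarrow> nat \<Rightarrow> real" where
  "capped_sums y t = rec_nat 0 (\<lambda>n v. min (v + y (Suc n)) (t * real (Suc n)))"

lemma capped_sums_0 [simp]: "capped_sums y t 0 = 0"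
  and capped_sums_Suc: "capped_sums y t (Suc n) = min (capped_sums y t n + y (Suc n)) (t * real (Suc n))"
  by (simp_all add: capped_sums_def)

lemma capped_sums_le: "capped_sums y t n \<le> t * real n"
  by (cases n) (simp_all add: capped_sums_Suc)

lemma capped_sums_increment:
  assumes "\<And>i. 0 \<le> y i" "t \<ge> 0"
  shows "0 \<le> capped_sums y t (Suc n) - capped_sums y t n \<and> capped_sums y t (Suc n) - capped_sums y t n \<le> y (Suc n)"
proof -
  have "capped_sums y t n \<le> t * real (Suc n)"
    using capped_sums_le[of y t n] mult_left_mono[of "real n" "real (Suc n)" t] assms(2) by linarith
  with assms(1) show ?thesis by (simp add: capped_sums_Suc)
qed

lemma capped_sums_eq: "\<exists>j\<le>n. capped_sums y t n = t * real j + ((\<Sum>i=1..n. y i) - (\<Sum>i=1..j. y i))"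
proof (induction n)
  case (Suc n)
  then obtain j where "j \<le> n" "capped_sums y t n = t * real j + ((\<Sum>i=1..n. y i) - (\<Sum>i=1..j. y i))"
    by blast
  thus ?case
    by (cases "capped_sums y t n + y (Suc n) \<le> t * real (Suc n)")
      (auto simp: capped_sums_Suc intro: exI[of _ j] exI[of _ "Suc n"])
qed simp

lemma averages_below_majorant:
  fixes y z :: "nat \<Rightarrow> real"
  assumes y_nonneg: "\<And>i. 0 \<le> y i" and z_le_y: "\<And>i. z i \<le> y i" and "t \<ge> 0"
    and z_avg: "(\<lambda>n. (\<Sum>i=1..n. z i) / real n) \<longlonglongrightarrow> t"
  obtains b where "\<And>i. 0 \<le> b i \<and> b i \<le> y i" "(\<lambda>n. (\<Sum>i=1..n. b i) / real n) \<longlonglongrightarrow> t"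
proof -
  define B where "B = capped_sums y t"
  have B_0: "B 0 = 0" by (simp add: B_def)
  have B_le: "B n \<le> t * real n" for n unfolding B_def by (rule capped_sums_le)
  have B_incr: "0 \<le> B (Suc n) - B n \<and> B (Suc n) - B n \<le> y (Suc n)" for n
    unfolding B_def by (rule capped_sums_increment[OF y_nonneg \<open>t \<ge> 0\<close>])
  have B_eq: "\<exists>j\<le>n. B n = t * real j + ((\<Sum>i=1..n. y i) - (\<Sum>i=1..j. y i))" for n
    unfolding B_def by (rule capped_sums_eq)
  define b where "b i = B i - B (i - 1)" for i
  have b_bounds: "0 \<le> b i \<and> b i \<le> y i" for i
    using B_incr y_nonneg by (cases i) (simp_all add: b_def)
  have sum_b: "(\<Sum>i=1..n. b i) = B n" for n
    by (induction n) (simp_all add: B_0 b_def)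
  define Z where "Z n = (\<Sum>i=1..n. z i)" for n
  define e where "e n = Z n - t * real n" for n
  have "incseq (\<lambda>n. (\<Sum>i=1..n. y i) - Z n)"
    by (rule incseq_SucI) (simp add: Z_def z_le_y)
  have B_ge: "\<exists>j\<le>n. t * real n + e n - e j \<le> B n" for n
  proof -
    obtain j where "j \<le> n" "B n = t * real j + ((\<Sum>i=1..n. y i) - (\<Sum>i=1..j. y i))" using B_eq by blast
    moreover have "(\<Sum>i=1..j. y i) - Z j \<le> (\<Sum>i=1..n. y i) - Z n"
      using incseqD[OF \<open>incseq _\<close> \<open>j \<le> n\<close>] by simp
    ultimately show ?thesis by (auto simp: e_def)
  qed
  have e_lim: "(\<lambda>n. e n / real n) \<longlonglongrightarrow> 0"
  proof -
    have "(\<lambda>n. Z n / real n - t) \<longlonglongrightarrow> 0"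
      using tendsto_diff[OF z_avg tendsto_const[of t]] by (simp add: Z_def)
    moreover have "\<forall>\<^sub>F n in sequentially. Z n / real n - t = e n / real n"
      by (intro eventually_sequentiallyI[of 1]) (simp add: e_def field_simps)
    ultimately show ?thesis by (rule Lim_transform_eventually)
  qed
  have "(\<lambda>n. (\<Sum>i=1..n. b i) / real n) \<longlonglongrightarrow> t"
    unfolding sum_b using B_le B_ge e_lim by (rule tendsto_averages_if_close_below)
  from that[OF b_bounds this] show ?thesis .
qed

lemma nmsg_le_powr: "real (nmsg n r) \<le> 2 powr (real n * r)"
  unfolding nmsg_def by (simp add: of_nat_floor)

lemma half_powr_le_nmsg:
  assumes "real m * r \<ge> 1"
  shows "2 powr (real m * r) / 2 \<le> real (nmsg m r)"
proof -
  have "2 powr 1 \<le> 2 powr (real m * r)" using assms by (intro powr_mono) auto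
  moreover have "2 powr (real m * r) - 1 \<le> real (nmsg m r)"
    unfolding nmsg_def by (simp add: of_nat_floor)
  ultimately show ?thesis by simp
qed

text \<open>Rounding \<open>2 powr (m * r)\<close> down to an integer costs at most one bit, which is where
  the \<open>- 1\<close> comes from.\<close>
lemma nmsg_le_power:
  assumes "r \<ge> 0" "real N * b \<le> real k * max 0 (real m * r - 1)"
  shows "nmsg N b \<le> nmsg m r ^ k"
proof -
  have base: "2 powr max 0 (real m * r - 1) \<le> real (nmsg m r)"
  proof (cases "real m * r \<le> 1")
    case True thus ?thesis using nmsg_ge_1[OF assms(1), of m] by simp
  next
    case False thus ?thesis using half_powr_le_nmsg[of m r] by (simp add: powr_diff)
  qed
  have "real (nmsg N b) \<le> 2 powr (real k * max 0 (real m * r - 1))"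
    using nmsg_le_powr[of N b] assms(2) by (meson order_trans powr_mono one_le_numeral)
  also have "\<dots> = (2 powr max 0 (real m * r - 1)) powr real k"
    by (simp add: powr_powr mult.commute)
  also have "\<dots> = (2 powr max 0 (real m * r - 1)) ^ k" by (simp add: powr_realpow)
  also have "\<dots> \<le> real (nmsg m r) ^ k" by (rule power_mono[OF base]) simp
  finally show ?thesis by (metis of_nat_le_iff of_nat_power)
qed

lemma sum_digits_eq_mod: "(\<Sum>b<k. (x div M ^ b mod M) * M ^ b) = (x::nat) mod M ^ k"
proof (induction k)
  case (Suc k)
  have "x mod M ^ Suc k = M ^ k * (x div M ^ k mod M) + x mod M ^ k"
    by (metis mod_mult2_eq power_Suc2)
  with Suc show ?case by simp
qed simp

text \<open>Messages and digits are numbered from 1, hence the shifts by one.\<close>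
definition digit :: "nat \<Rightarrow> nat \<Rightarrow> nat \<Rightarrow> nat" where
  "digit M w b = (w - 1) div M ^ b mod M + 1"

lemma digit_range: "M \<ge> 1 \<Longrightarrow> digit M w b \<in> {1..M}"
  by (simp add: digit_def Suc_leI)

lemma sum_digits:
  assumes "w \<in> {1..M ^ k}"
  shows "(\<Sum>b<k. (digit M w b - 1) * M ^ b) + 1 = w"
proof -
  have "w - 1 < M ^ k" using assms by auto
  with assms show ?thesis by (simp add: digit_def sum_digits_eq_mod)
qed

text \<open>Block \<open>b < k\<close> occupies the cells \<open>b * s, \<dots>, b * s + m - 1\<close>. At write \<open>i\<close> the message is
  written in base \<open>nmsg m (R i)\<close>, and block \<open>b\<close> stores its \<open>b\<close>-th digit with the m-cell encoder.\<close>
definition block_of :: "nat \<Rightarrow> nat \<Rightarrow> (nat \<Rightarrow> bool) \<Rightarrow> nat \<Rightarrow> nat \<Rightarrow> bool" where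
  "block_of m s u b c \<longleftrightarrow> c < m \<and> u (b * s + c)"

definition in_blocks :: "nat \<Rightarrow> nat \<Rightarrow> nat \<Rightarrow> nat \<Rightarrow> bool" where
  "in_blocks k m s x \<longleftrightarrow> x < k * s \<and> x mod s < m"

definition block_enc :: "nat \<Rightarrow> nat \<Rightarrow> nat \<Rightarrow> (nat \<Rightarrow> real) \<Rightarrow> (nat \<Rightarrow> nat \<Rightarrow> (nat \<Rightarrow> bool) \<Rightarrow> (nat \<Rightarrow> bool))
    \<Rightarrow> nat \<Rightarrow> nat \<Rightarrow> (nat \<Rightarrow> bool) \<Rightarrow> (nat \<Rightarrow> bool)" where
  "block_enc m s k R E i w u x \<longleftrightarrow>
     in_blocks k m s x \<and> E i (digit (nmsg m (R i)) w (x div s)) (block_of m s u (x div s)) (x mod s)"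

definition block_dec :: "nat \<Rightarrow> nat \<Rightarrow> nat \<Rightarrow> (nat \<Rightarrow> real) \<Rightarrow> (nat \<Rightarrow> (nat \<Rightarrow> bool) \<Rightarrow> nat)
    \<Rightarrow> nat \<Rightarrow> (nat \<Rightarrow> bool) \<Rightarrow> nat" where
  "block_dec m s k R D i v = (\<Sum>b<k. (D i (block_of m s v b) - 1) * nmsg m (R i) ^ b) + 1"

lemma block_of_in_states: "block_of m s u b \<in> states m"
  by (simp add: block_of_def states_def)

lemma in_blocks_block: "b < k \<Longrightarrow> c < m \<Longrightarrow> m \<le> s \<Longrightarrow> in_blocks k m s (b * s + c)"
proof -
  assume "b < k" "c < m" "m \<le> s"
  hence "b * s + c < Suc b * s" by simp
  also have "\<dots> \<le> k * s" using \<open>b < k\<close> by (intro mult_right_mono) auto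
  finally show ?thesis using \<open>c < m\<close> \<open>m \<le> s\<close> by (simp add: in_blocks_def)
qed

lemma block_of_block_enc:
  assumes "is_code m R E D" "i \<ge> 1" "b < k" "m \<le> s"
  shows "block_of m s (block_enc m s k R E i w u) b = E i (digit (nmsg m (R i)) w b) (block_of m s u b)"
proof
  fix c
  have "E i (digit (nmsg m (R i)) w b) (block_of m s u b) \<in> states m"
    using assms(1,2) digit_range[OF nmsg_ge_1] block_of_in_states by (simp add: is_code_def)
  thus "block_of m s (block_enc m s k R E i w u) b c = E i (digit (nmsg m (R i)) w b) (block_of m s u b) c"
    using in_blocks_block[OF assms(3) _ assms(4), of c] assms(4)
    by (cases "c < m") (auto simp: block_of_def block_enc_def states_def)
qed

lemma is_code_block:
  assumes "is_code m R E D" "m \<le> s" "k * s \<le> N"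
    and "\<And>i. i \<ge> 1 \<Longrightarrow> 0 \<le> b i \<and> nmsg N (b i) \<le> nmsg m (R i) ^ k"
  shows "is_code N b (block_enc m s k R E) (block_dec m s k R D)"
  unfolding is_code_def
proof (intro allI impI conjI)
  fix i :: nat assume i: "i \<ge> 1"
  show "0 \<le> b i" using assms(4)[OF i] by simp
  show "\<forall>w\<in>{1..nmsg N (b i)}. \<forall>u\<in>states N. block_enc m s k R E i w u \<in> states N \<and>
      block_dec m s k R D i (block_enc m s k R E i w u) = w"
  proof (intro ballI conjI)
    fix w u assume w: "w \<in> {1..nmsg N (b i)}"
    show "block_enc m s k R E i w u \<in> states N"
      using assms(3) by (auto simp: states_def block_enc_def in_blocks_def)
    have "D i (block_of m s (block_enc m s k R E i w u) bb) = digit (nmsg m (R i)) w bb" if "bb < k" for bb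
      using assms(1) i digit_range[OF nmsg_ge_1] block_of_in_states
      by (simp add: block_of_block_enc[OF assms(1) i that assms(2)] is_code_def)
    hence "block_dec m s k R D i (block_enc m s k R E i w u)
        = (\<Sum>bb<k. (digit (nmsg m (R i)) w bb - 1) * nmsg m (R i) ^ bb) + 1"
      by (simp add: block_dec_def)
    also have "\<dots> = w" using w assms(4)[OF i] by (intro sum_digits) auto
    finally show "block_dec m s k R D i (block_enc m s k R E i w u) = w" .
  qed
qed

lemma valid_msgs_digit:
  assumes "is_code m R E D"
  shows "valid_msgs m R (\<lambda>i. digit (nmsg m (R i)) (ms i) q)"
proof -
  have "nmsg m (R i) \<ge> 1" if "i \<ge> 1" for i using assms that nmsg_ge_1 by (simp add: is_code_def)
  thus ?thesis unfolding valid_msgs_def using digit_range by blast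
qed

lemma state_seq_block:
  assumes "is_code m R E D" "m \<le> s"
  shows "state_seq (block_enc m s k R E) ms n x \<longleftrightarrow>
    in_blocks k m s x \<and> state_seq E (\<lambda>i. digit (nmsg m (R i)) (ms i) (x div s)) n (x mod s)"
proof (induction n arbitrary: x)
  case (Suc n)
  define q where "q = x div s"
  have "block_of m s (state_seq (block_enc m s k R E) ms n) q
      = state_seq E (\<lambda>i. digit (nmsg m (R i)) (ms i) q) n" if "q < k"
  proof
    fix c
    have "c < m \<longrightarrow> (q * s + c) div s = q \<and> (q * s + c) mod s = c" using assms(2) by auto
    thus "block_of m s (state_seq (block_enc m s k R E) ms n) q c
        = state_seq E (\<lambda>i. digit (nmsg m (R i)) (ms i) q) n c"
      using Suc.IH in_blocks_block[OF that _ assms(2)]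
        state_seq_in_states[OF assms(1) valid_msgs_digit[OF assms(1)], of ms q n]
      by (cases "c < m") (auto simp: block_of_def states_def)
  qed
  moreover have "in_blocks k m s x \<Longrightarrow> q < k"
    by (simp add: in_blocks_def q_def less_mult_imp_div_less)
  moreover have "state_seq (block_enc m s k R E) ms (Suc n) x \<longleftrightarrow> in_blocks k m s x \<and>
      E (Suc n) (digit (nmsg m (R (Suc n))) (ms (Suc n)) q)
        (block_of m s (state_seq (block_enc m s k R E) ms n) q) (x mod s)"
    by (simp only: state_seq.simps block_enc_def q_def)
  ultimately show ?case by (auto simp: q_def)
qed simp

text \<open>Since blocks of \<open>m \<ge> \<beta>\<close> cells are separated by gaps of \<beta> cells, a window of \<beta>
  cells meets at most the block \<open>(j + \<beta>) div (m + \<beta>)\<close>, and it can be slid into a window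
  \<open>j0, \<dots>, j0 + \<beta> - 1\<close> inside that block without losing any of its cells.\<close>
lemma window_changes_blocks:
  fixes w :: "nat \<Rightarrow> nat \<Rightarrow> nat \<Rightarrow> bool"
  assumes "\<beta> \<le> m"
  defines "s \<equiv> m + \<beta>"
  shows "\<exists>j0. j0 + \<beta> \<le> m \<and>
    card (window_changes (\<lambda>n x. in_blocks k m s x \<and> w (x div s) n (x mod s)) \<alpha> \<beta> i j)
      \<le> card (window_changes (w ((j + \<beta>) div s)) \<alpha> \<beta> i j0)"
proof (intro exI conjI)
  define bk where "bk = (j + \<beta>) div s"
  define base where "base = bk * s"
  define j0 where "j0 = (if j \<le> base then 0 else min (j - base) (m - \<beta>))"
  show "j0 + \<beta> \<le> m" using assms(1) by (auto simp: j0_def min_def)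
  have "window_changes (\<lambda>n x. in_blocks k m s x \<and> w (x div s) n (x mod s)) \<alpha> \<beta> i j
      \<subseteq> (\<lambda>(kk, l'). (kk, base + j0 + l' - j)) ` window_changes (w bk) \<alpha> \<beta> i j0"
  proof clarify
    fix kk l
    assume "(kk, l) \<in> window_changes (\<lambda>n x. in_blocks k m s x \<and> w (x div s) n (x mod s)) \<alpha> \<beta> i j"
    hence kk: "kk < \<alpha>" and l: "l < \<beta>" and "(j + l) mod s < m"
      and ne: "w ((j + l) div s) (i + kk) ((j + l) mod s) \<noteq> w ((j + l) div s) (i + kk + 1) ((j + l) mod s)"
      by (auto simp: window_changes_def in_blocks_def)
    define c where "c = (j + l) mod s"
    have "(j + \<beta>) div s = (j + l) div s"
    proof (rule div_nat_eqI)
      have "j + l = s * ((j + l) div s) + (j + l) mod s" by simp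
      thus "s * ((j + l) div s) \<le> j + \<beta>" "j + \<beta> < s * Suc ((j + l) div s)"
        using l \<open>(j + l) mod s < m\<close> unfolding mult_Suc_right s_def by linarith+
    qed
    hence "(j + l) div s = bk" by (simp add: bk_def)
    hence x: "j + l = base + c" unfolding base_def c_def by (metis div_mult_mod_eq)
    have c: "j0 \<le> c" "c < j0 + \<beta>"
      using x l \<open>(j + l) mod s < m\<close> assms(1) by (auto simp: j0_def c_def min_def split: if_splits)
    have "(kk, c - j0) \<in> window_changes (w bk) \<alpha> \<beta> i j0"
      using kk c ne \<open>(j + l) div s = bk\<close> by (auto simp: window_changes_def c_def)
    moreover have "(kk, l) = (kk, base + j0 + (c - j0) - j)" using x c by simp
    ultimately show "(kk, l) \<in> (\<lambda>(kk, l'). (kk, base + j0 + l' - j)) ` window_changes (w bk) \<alpha> \<beta> i j0"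
      by force
  qed
  thus "card (window_changes (\<lambda>n x. in_blocks k m s x \<and> w (x div s) n (x mod s)) \<alpha> \<beta> i j)
      \<le> card (window_changes (w ((j + \<beta>) div s)) \<alpha> \<beta> i j0)"
    unfolding bk_def by (rule surj_card_le[OF finite_window_changes])
qed

lemma constrained_block:
  assumes "is_code m R E D" "constrained m \<alpha> \<beta> p R E" "\<beta> \<le> m"
  shows "constrained N \<alpha> \<beta> p b (block_enc m (m + \<beta>) k R E)"
  unfolding constrained_iff
proof (intro allI impI)
  fix ms i j
  let ?w = "\<lambda>q. state_seq E (\<lambda>i. digit (nmsg m (R i)) (ms i) q)"
  have "state_seq (block_enc m (m + \<beta>) k R E) ms
      = (\<lambda>n x. in_blocks k m (m + \<beta>) x \<and> ?w (x div (m + \<beta>)) n (x mod (m + \<beta>)))"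
    by (simp add: fun_eq_iff state_seq_block[OF assms(1) le_add1])
  moreover obtain j0 where "j0 + \<beta> \<le> m"
    "card (window_changes (\<lambda>n x. in_blocks k m (m + \<beta>) x \<and> ?w (x div (m + \<beta>)) n (x mod (m + \<beta>))) \<alpha> \<beta> i j)
      \<le> card (window_changes (?w ((j + \<beta>) div (m + \<beta>))) \<alpha> \<beta> i j0)"
    using window_changes_blocks[OF assms(3), where w = ?w and k = k and \<alpha> = \<alpha> and i = i and j = j]
    by blast
  moreover have "card (window_changes (?w ((j + \<beta>) div (m + \<beta>))) \<alpha> \<beta> i j0) \<le> p"
    using assms(2) valid_msgs_digit[OF assms(1)] \<open>j0 + \<beta> \<le> m\<close> by (simp add: constrained_iff)
  ultimately show "card (window_changes (state_seq (block_enc m (m + \<beta>) k R E) ms) \<alpha> \<beta> i j) \<le> p"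
    by simp
qed

lemma block_rate_achievable:
  assumes "r \<in> achievable_rates \<alpha> \<beta> p m" "\<beta> \<le> m" "k * (m + \<beta>) \<le> N" "N \<ge> 1" "real m * r \<ge> 1"
  shows "real k / real N * (real m * r - 1) \<in> achievable_rates \<alpha> \<beta> p N"
proof -
  obtain R E D where code: "is_code m R E D" and con: "constrained m \<alpha> \<beta> p R E" and rate: "has_rate R r"
    using assms(1) by (auto simp: achievable_rates_def)
  define t where "t = real k / real N * (real m * r - 1)"
  define y where "y i = real k / real N * max 0 (real m * R i - 1)" for i
  define z where "z i = real k / real N * (real m * R i - 1)" for i
  have z_avg: "(\<lambda>n. (\<Sum>i=1..n. z i) / real n) \<longlonglongrightarrow> t"
    using has_rate_affine[OF rate, of "real k / real N" "real m" 1] unfolding has_rate_def z_def t_def .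
  have y_nonneg: "0 \<le> y i" and z_le_y: "z i \<le> y i" for i
    unfolding y_def z_def by (simp, intro mult_left_mono) auto
  have "t \<ge> 0" using assms(5) by (simp add: t_def)
  obtain b where b: "\<And>i. 0 \<le> b i \<and> b i \<le> y i" and b_avg: "(\<lambda>n. (\<Sum>i=1..n. b i) / real n) \<longlonglongrightarrow> t"
    using averages_below_majorant[OF y_nonneg z_le_y \<open>t \<ge> 0\<close> z_avg] by blast
  have "nmsg N (b i) \<le> nmsg m (R i) ^ k" if "i \<ge> 1" for i
  proof (rule nmsg_le_power)
    show "R i \<ge> 0" using code that by (simp add: is_code_def)
    have "real N * b i \<le> real N * y i" using b by (intro mult_left_mono) auto
    thus "real N * b i \<le> real k * max 0 (real m * R i - 1)" using assms(4) by (simp add: y_def)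
  qed
  hence "is_code N b (block_enc m (m + \<beta>) k R E) (block_dec m (m + \<beta>) k R D)"
    using is_code_block[OF code le_add1 assms(3)] b by blast
  moreover have "constrained N \<alpha> \<beta> p b (block_enc m (m + \<beta>) k R E)"
    by (rule constrained_block[OF code con assms(2)])
  moreover have "has_rate b t" using b_avg by (simp add: has_rate_def)
  ultimately show ?thesis unfolding achievable_rates_def t_def by blast
qed

lemma block_rate_estimate:
  fixes r m \<beta> N k :: real
  assumes "0 \<le> r" "r \<le> 2" "1 \<le> m * r" "m > 0" "\<beta> \<ge> 0" "N > 0" "N < (k + 1) * (m + \<beta>)"
  shows "r - (2 * \<beta> + 1) / m - 2 * m / N \<le> k / N * (m * r - 1)"
proof -
  define d where "d = m * r - 1"
  have "d \<ge> 0" "d \<le> 2 * m"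
    using assms(3) mult_left_mono[OF assms(2) less_imp_le[OF assms(4)]] unfolding d_def by linarith+
  have "N / (m + \<beta>) - 1 < k" using assms(4,5,7) by (simp add: field_simps)
  hence "(N / (m + \<beta>) - 1) * d \<le> k * d" using \<open>d \<ge> 0\<close> by (intro mult_right_mono) auto
  hence "(N / (m + \<beta>) - 1) * d / N \<le> k * d / N" using assms(6) by (intro divide_right_mono) auto
  moreover have "d / (m + \<beta>) - d / N = (N / (m + \<beta>) - 1) * d / N" using assms(6) by (simp add: field_simps)
  ultimately have "d / (m + \<beta>) - d / N \<le> k / N * d" by simp
  moreover have "d / (m + \<beta>) = r - (\<beta> * r + 1) / (m + \<beta>)" using assms(4,5) by (simp add: d_def field_simps)
  moreover have "(\<beta> * r + 1) / (m + \<beta>) \<le> (2 * \<beta> + 1) / m"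
  proof -
    have "(\<beta> * r + 1) / (m + \<beta>) \<le> (2 * \<beta> + 1) / (m + \<beta>)"
      using mult_left_mono[OF assms(2,5)] assms(4,5) by (intro divide_right_mono) (auto simp: mult.commute)
    also have "\<dots> \<le> (2 * \<beta> + 1) / m" using assms(4,5) by (intro divide_left_mono) auto
    finally show ?thesis .
  qed
  moreover have "d / N \<le> 2 * m / N" using \<open>d \<le> 2 * m\<close> assms(6) by (simp add: divide_right_mono)
  ultimately show ?thesis unfolding d_def by linarith
qed

lemma Cn_lower_bound:
  assumes "\<beta> \<ge> 1" "\<beta> \<le> m" "m + \<beta> \<le> N"
  shows "Cn \<alpha> \<beta> p m - (2 * real \<beta> + 1) / real m - 2 * real m / real N \<le> Cn \<alpha> \<beta> p N"
proof -
  define k where "k = N div (m + \<beta>)"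
  have "N < (k + 1) * (m + \<beta>)" using assms(1) by (simp add: k_def dividend_less_div_times)
  hence N_lt: "real N < (real k + 1) * (real m + real \<beta>)" by (metis of_nat_add of_nat_1 of_nat_less_iff of_nat_mult)
  have "k * (m + \<beta>) \<le> N" by (simp add: k_def)
  have "r \<le> Cn \<alpha> \<beta> p N + (2 * real \<beta> + 1) / real m + 2 * real m / real N"
    if r: "r \<in> achievable_rates \<alpha> \<beta> p m" for r
  proof (cases "real m * r \<ge> 1")
    case True
    have "real k / real N * (real m * r - 1) \<le> Cn \<alpha> \<beta> p N"
      using block_rate_achievable[OF r assms(2) \<open>k * (m + \<beta>) \<le> N\<close> _ True] achievable_rate_le_Cn assms
      by simp
    moreover have "r - (2 * real \<beta> + 1) / real m - 2 * real m / real N \<le> real k / real N * (real m * r - 1)"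
      using achievable_rate_bounds[OF r] block_rate_estimate[OF _ _ True _ _ _ N_lt] assms by simp
    ultimately show ?thesis by linarith
  next
    case False
    hence "r \<le> 1 / real m" using assms by (simp add: field_simps)
    also have "\<dots> \<le> (2 * real \<beta> + 1) / real m" using assms by (simp add: divide_right_mono)
    finally have "r \<le> (2 * real \<beta> + 1) / real m" .
    moreover have "0 \<le> Cn \<alpha> \<beta> p N" using Cn_bounds[of N \<alpha> \<beta> p] assms by simp
    moreover have "0 \<le> 2 * real m / real N" by simp
    ultimately show ?thesis by linarith
  qed
  hence "Cn \<alpha> \<beta> p m \<le> Cn \<alpha> \<beta> p N + (2 * real \<beta> + 1) / real m + 2 * real m / real N"
    by (rule Cn_le)
  thus ?thesis by simp
qed

section \<open>Convergence of the finite-length capacities\<close>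

text \<open>A Fekete-type argument: every value \<open>a m\<close> is, up to \<open>c / m\<close>, a lower bound for all
  sufficiently late values, so the limit \<open>L\<close> of any convergent subsequence bounds \<open>a\<close>
  asymptotically from above (\<open>a m \<le> L + c / m\<close>) and from below.\<close>
context
  fixes a :: "nat \<Rightarrow> real" and m0 :: nat and c d :: real
  assumes lower: "\<And>m N. m0 \<le> m \<Longrightarrow> m + m0 \<le> N \<Longrightarrow> a m - c / real m - d * real m / real N \<le> a N"
begin

lemma le_subseq_limit:
  assumes "strict_mono \<phi>" "(a \<circ> \<phi>) \<longlonglongrightarrow> L" "m0 \<le> m"
  shows "a m - c / real m \<le> L"
proof (rule LIMSEQ_le[OF _ assms(2)])
  have \<phi>_lim: "filterlim \<phi> sequentially sequentially" using assms(1) by (rule filterlim_subseq)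
  have "(\<lambda>k. d * real m / real (\<phi> k)) \<longlonglongrightarrow> 0"
    by (rule filterlim_compose[OF lim_const_over_n \<phi>_lim])
  thus "(\<lambda>k. a m - c / real m - d * real m / real (\<phi> k)) \<longlonglongrightarrow> a m - c / real m"
    by (auto intro: tendsto_eq_intros)
  have "\<forall>\<^sub>F k in sequentially. m + m0 \<le> \<phi> k"
    using \<phi>_lim by (simp add: filterlim_at_top)
  thus "\<exists>K. \<forall>k\<ge>K. a m - c / real m - d * real m / real (\<phi> k) \<le> (a \<circ> \<phi>) k"
    using lower[OF assms(3)] by (auto simp: eventually_sequentially)
qed

lemma eventually_gt_below_subseq_limit:
  assumes "strict_mono \<phi>" "(a \<circ> \<phi>) \<longlonglongrightarrow> L" "x < L"
  shows "\<forall>\<^sub>F N in sequentially. x < a N"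
proof -
  have \<phi>_lim: "filterlim \<phi> sequentially sequentially" using assms(1) by (rule filterlim_subseq)
  define \<epsilon> where "\<epsilon> = (L - x) / 3"
  have "\<epsilon> > 0" and x_eq: "x = L - 3 * \<epsilon>" using assms(3) by (simp_all add: \<epsilon>_def field_simps)
  have "\<forall>\<^sub>F k in sequentially. m0 \<le> \<phi> k \<and> c / real (\<phi> k) < \<epsilon> \<and> L - \<epsilon> < a (\<phi> k)"
  proof (intro eventually_conj)
    show "\<forall>\<^sub>F k in sequentially. m0 \<le> \<phi> k" using \<phi>_lim by (simp add: filterlim_at_top)
    show "\<forall>\<^sub>F k in sequentially. c / real (\<phi> k) < \<epsilon>"
      using filterlim_compose[OF lim_const_over_n \<phi>_lim] \<open>\<epsilon> > 0\<close> by (rule order_tendstoD)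
    show "\<forall>\<^sub>F k in sequentially. L - \<epsilon> < a (\<phi> k)"
      using order_tendstoD(1)[OF assms(2), of "L - \<epsilon>"] \<open>\<epsilon> > 0\<close> by simp
  qed
  then obtain m where m: "m0 \<le> m" "c / real m < \<epsilon>" "L - \<epsilon> < a m"
    by (auto simp: eventually_sequentially)
  have "\<forall>\<^sub>F N in sequentially. m + m0 \<le> N \<and> d * real m / real N < \<epsilon>"
    using order_tendstoD(2)[OF lim_const_over_n[of "d * real m"] \<open>\<epsilon> > 0\<close>]
    by (intro eventually_conj eventually_ge_at_top) simp_all
  thus ?thesis
  proof eventually_elim
    case (elim N)
    hence "a m - c / real m - d * real m / real N \<le> a N" using lower[OF m(1)] by blast
    thus "x < a N" using elim m(2,3) x_eq by linarith
  qed
qed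

lemma convergent_if_lower_bounds:
  assumes "bounded (range a)"
  shows "convergent a"
proof -
  obtain L \<phi> where \<phi>: "strict_mono \<phi>" and lim: "(a \<circ> \<phi>) \<longlonglongrightarrow> L"
    using bounded_imp_convergent_subsequence[OF assms] by blast
  have "a \<longlonglongrightarrow> L"
  proof (rule order_tendstoI)
    fix x assume "L < x"
    have "\<forall>\<^sub>F N in sequentially. L + c / real N < x"
      using \<open>L < x\<close> by (intro order_tendstoD(2)[of _ L]) (auto intro!: tendsto_eq_intros lim_const_over_n)
    moreover have "\<forall>\<^sub>F N in sequentially. a N \<le> L + c / real N"
      using le_subseq_limit[OF \<phi> lim] by (auto simp: eventually_sequentially algebra_simps intro!: exI[of _ m0])
    ultimately show "\<forall>\<^sub>F N in sequentially. a N < x" by eventually_elim simp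
  qed (rule eventually_gt_below_subseq_limit[OF \<phi> lim])
  thus ?thesis by (rule convergentI)
qed

end

lemma Cn_convergent:
  assumes "\<beta> \<ge> 1"
  shows "convergent (Cn \<alpha> \<beta> p)"
proof (rule convergent_if_lower_bounds)
  have "range (Cn \<alpha> \<beta> p) \<subseteq> {min 0 (Cn \<alpha> \<beta> p 0)..max 2 (Cn \<alpha> \<beta> p 0)}"
  proof
    fix x assume "x \<in> range (Cn \<alpha> \<beta> p)"
    then obtain n where "x = Cn \<alpha> \<beta> p n" by blast
    thus "x \<in> {min 0 (Cn \<alpha> \<beta> p 0)..max 2 (Cn \<alpha> \<beta> p 0)}"
      using Cn_bounds[of n \<alpha> \<beta> p] by (cases "n = 0") auto
  qed
  thus "bounded (range (Cn \<alpha> \<beta> p))" by (rule bounded_subset[OF bounded_closed_interval])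
  show "Cn \<alpha> \<beta> p m - (2 * real \<beta> + 1) / real m - 2 * real m / real N \<le> Cn \<alpha> \<beta> p N"
    if "\<beta> \<le> m" "m + \<beta> \<le> N" for m N
    using Cn_lower_bound[OF assms that] .
qed

lemma Cn_tendsto_Ccap: "\<beta> \<ge> 1 \<Longrightarrow> Cn \<alpha> \<beta> p \<longlonglongrightarrow> Ccap \<alpha> \<beta> p"
  unfolding Ccap_def using Cn_convergent convergent_LIMSEQ_iff by blast

lemma Cn_divide_le_Cn:
  assumes "c > 0" "n' \<ge> 1"
    and "\<And>r. r \<in> achievable_rates \<alpha> \<beta> p n \<Longrightarrow> r / c \<in> achievable_rates \<alpha>' \<beta>' p' n'"
  shows "Cn \<alpha> \<beta> p n / c \<le> Cn \<alpha>' \<beta>' p' n'"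
proof -
  have "Cn \<alpha> \<beta> p n \<le> c * Cn \<alpha>' \<beta>' p' n'"
  proof (rule Cn_le)
    fix r assume "r \<in> achievable_rates \<alpha> \<beta> p n"
    hence "r / c \<le> Cn \<alpha>' \<beta>' p' n'" using assms(2,3) achievable_rate_le_Cn by blast
    thus "r \<le> c * Cn \<alpha>' \<beta>' p' n'" using assms(1) by (simp add: field_simps)
  qed
  thus ?thesis using assms(1) by (simp add: field_simps)
qed

theorem theorem8:
  fixes \<alpha> \<beta> p :: nat
  assumes "\<alpha> > 0" and "\<beta> > 0" and "p > 0"
  shows "Ccap \<alpha> \<beta> p \<ge> max (Ccap \<alpha> 1 p / real \<beta>) (Ccap 1 \<beta> p / real \<alpha>)"
proof -
  have lim: "Cn \<alpha> \<beta> p \<longlonglongrightarrow> Ccap \<alpha> \<beta> p" using assms(2) by (simp add: Cn_tendsto_Ccap)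
  have "strict_mono (\<lambda>n. \<beta> * n)" using assms(2) by (simp add: strict_mono_def)
  hence lim_spread: "(\<lambda>n. Cn \<alpha> \<beta> p (\<beta> * n)) \<longlonglongrightarrow> Ccap \<alpha> \<beta> p"
    using filterlim_compose[OF lim filterlim_subseq] by blast
  have "Ccap \<alpha> 1 p / real \<beta> \<le> Ccap \<alpha> \<beta> p"
  proof (rule LIMSEQ_le[OF tendsto_divide[OF Cn_tendsto_Ccap tendsto_const] lim_spread])
    show "\<exists>N. \<forall>n\<ge>N. Cn \<alpha> 1 p n / real \<beta> \<le> Cn \<alpha> \<beta> p (\<beta> * n)"
      using assms(2) spread_rate_achievable by (intro exI[of _ 1] allI impI Cn_divide_le_Cn) auto
  qed (use assms in auto)
  moreover have "Ccap 1 \<beta> p / real \<alpha> \<le> Ccap \<alpha> \<beta> p"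
  proof (rule LIMSEQ_le[OF tendsto_divide[OF Cn_tendsto_Ccap tendsto_const] lim])
    show "\<exists>N. \<forall>n\<ge>N. Cn 1 \<beta> p n / real \<alpha> \<le> Cn \<alpha> \<beta> p n"
      using assms(1) stretch_rate_achievable by (intro exI[of _ 1] allI impI Cn_divide_le_Cn) auto
  qed (use assms in auto)
  ultimately show ?thesis by simp
qed

end
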